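(* Let $\ell\ge1$, $N\ge1$ be integers and $l\ge1$ real. For $1\le n\le N$ let $A_n=\{1\le m\le N: d_\ell(n,m)\le l\}$, and for integers $k\ge0$ let $\mathcal A_n(k)=\{1\le m\le N: d_\ell(A_n,A_m)=k\}$. Then for all $1\le n\le N$ and $k\ge0$, $$|A_n|\le K_1 l\quad\text{and}\quad|\mathcal A_n(k)|\le K_2 l,$$ with $K_1=3\ell^2$ and $K_2=4\ell^6(\ell^2+2)$.
   Context: For $a,b\in\mathbb R$, $d_\ell(a,b)=\min_{1\le i,j\le\ell}|ia-jb|$, and for $A,B\subset\mathbb R$, $d_\ell(A,B)=\inf\{d_\ell(a,b):a\in A,b\in B\}$. *)

theory Defs
  imports Complex_Main
begin

definition d_ell :: "nat \<Rightarrow> real \<Rightarrow> real \<Rightarrow> real" where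
  "d_ell L a b = Min {\<bar>real i * a - real j * b\<bar> | i j. i \<in> {1..L} \<and> j \<in> {1..L}}"

definition d_ell_set :: "nat \<Rightarrow> real set \<Rightarrow> real set \<Rightarrow> real" where
  "d_ell_set L A B = Inf {d_ell L a b | a b. a \<in> A \<and> b \<in> B}"

definition A_set :: "nat \<Rightarrow> nat \<Rightarrow> real \<Rightarrow> nat \<Rightarrow> nat set" where
  "A_set L N l n = {m \<in> {1..N}. d_ell L (real n) (real m) \<le> l}"

definition calA_set :: "nat \<Rightarrow> nat \<Rightarrow> real \<Rightarrow> nat \<Rightarrow> nat \<Rightarrow> nat set" where
  "calA_set L N l n k = {m \<in> {1..N}.
     d_ell_set L (real ` A_set L N l n) (real ` A_set L N l m) = real k}"

end

theory Submission
  imports Defs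
begin

text \<open>If \<open>d_\<ell>(x, y) \<le> r\<close>, then \<open>y\<close> lies within \<open>r\<close> of one of the \<open>\<ell>\<^sup>2\<close> points \<open>i x / j\<close>.
  So \<open>A_n\<close> is covered by \<open>\<ell>\<^sup>2\<close> intervals of length \<open>2l\<close>. If \<open>m \<in> \<A>_n(k)\<close>, pick
  \<open>a \<in> A_n\<close>, \<open>b \<in> A_m\<close> realising \<open>d_\<ell>(A_n, A_m) = k\<close>, say \<open>i\<^sub>1 a - j\<^sub>1 b = \<plusminus>k\<close>; following the
  chain \<open>n \<rightarrow> a \<rightarrow> b \<rightarrow> m\<close> places \<open>m\<close> within \<open>(\<ell>\<^sup>2 + 1) l\<close> of one of \<open>2\<ell>\<^sup>6\<close> points
  determined by \<open>n\<close>, \<open>k\<close>, the six multipliers and the sign.\<close>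

lemma card_nat_near_le:
  fixes c w :: real
  assumes "w \<ge> 0"
  shows "finite {m::nat. \<bar>real m - c\<bar> \<le> w}"
    and "real (card {m::nat. \<bar>real m - c\<bar> \<le> w}) \<le> 2 * w + 1"
proof -
  let ?S = "{m::nat. \<bar>real m - c\<bar> \<le> w}"
  have "?S \<subseteq> {0..nat \<lfloor>c + w\<rfloor>}"
    by (auto simp: le_nat_iff le_floor_iff)
  then show fin: "finite ?S"
    using finite_subset by blast
  show "real (card ?S) \<le> 2 * w + 1"
  proof (cases "?S = {}")
    case True
    then show ?thesis using assms by simp
  next
    case False
    define m0 where "m0 = Min ?S"
    have m0: "m0 \<in> ?S" "\<And>m. m \<in> ?S \<Longrightarrow> m0 \<le> m"
      using Min_in[OF fin False] Min_le[OF fin] by (auto simp: m0_def)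
    have "?S \<subseteq> {m0..m0 + nat \<lfloor>2 * w\<rfloor>}"
    proof
      fix m assume m: "m \<in> ?S"
      then have "real (m - m0) \<le> 2 * w"
        using m0 by (auto simp: of_nat_diff)
      then have "m - m0 \<le> nat \<lfloor>2 * w\<rfloor>"
        by (simp add: le_nat_iff le_floor_iff)
      then show "m \<in> {m0..m0 + nat \<lfloor>2 * w\<rfloor>}"
        using m0(2)[OF m] by auto
    qed
    then have "card ?S \<le> nat \<lfloor>2 * w\<rfloor> + 1"
      using card_mono[of "{m0..m0 + nat \<lfloor>2 * w\<rfloor>}"] by simp
    then show ?thesis
      using assms by linarith
  qed
qed

lemma card_le_of_covered:
  fixes C :: "real set" and w :: real and S :: "nat set"
  assumes "finite C" "w \<ge> 0" and covered: "\<And>m. m \<in> S \<Longrightarrow> \<exists>c\<in>C. \<bar>real m - c\<bar> \<le> w"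
  shows "real (card S) \<le> real (card C) * (2 * w + 1)"
proof -
  let ?T = "\<lambda>c. {m::nat. \<bar>real m - c\<bar> \<le> w}"
  have "S \<subseteq> (\<Union>c\<in>C. ?T c)"
    using covered by blast
  moreover have "finite (\<Union>c\<in>C. ?T c)"
    using assms(1) card_nat_near_le(1)[OF assms(2)] by auto
  ultimately have "card S \<le> card (\<Union>c\<in>C. ?T c)"
    by (rule card_mono[rotated])
  also have "\<dots> \<le> (\<Sum>c\<in>C. card (?T c))"
    by (rule card_UN_le[OF assms(1)])
  finally have "real (card S) \<le> (\<Sum>c\<in>C. real (card (?T c)))"
    by (metis of_nat_le_iff of_nat_sum)
  also have "\<dots> \<le> (\<Sum>c\<in>C. 2 * w + 1)"
    by (rule sum_mono) (rule card_nat_near_le(2)[OF assms(2)])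
  finally show ?thesis by simp
qed

lemma d_ell_image_eq:
  "{\<bar>real i * a - real j * b\<bar> | i j. i \<in> {1..L} \<and> j \<in> {1..L}}
   = (\<lambda>(i, j). \<bar>real i * a - real j * b\<bar>) ` ({1..L} \<times> {1..L})"
  by force

lemma d_ell_attained:
  assumes "L \<ge> 1"
  obtains i j where "i \<in> {1..L}" "j \<in> {1..L}" "d_ell L a b = \<bar>real i * a - real j * b\<bar>"
proof -
  have "d_ell L a b \<in> (\<lambda>(i, j). \<bar>real i * a - real j * b\<bar>) ` ({1..L} \<times> {1..L})"
    unfolding d_ell_def d_ell_image_eq by (rule Min_in) (use assms in auto)
  then show ?thesis
    using that by auto
qed

lemma d_ell_le:
  assumes "i \<in> {1..L}" "j \<in> {1..L}"
  shows "d_ell L a b \<le> \<bar>real i * a - real j * b\<bar>"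
  unfolding d_ell_def d_ell_image_eq by (rule Min_le) (use assms in auto)

lemma self_in_A_set:
  assumes "L \<ge> 1" "l \<ge> 0" "m \<in> {1..N}"
  shows "m \<in> A_set L N l m"
  using assms d_ell_le[of 1 L 1 "real m" "real m"] unfolding A_set_def by auto

lemma d_ell_set_attained:
  assumes "finite A" "finite B" "A \<noteq> {}" "B \<noteq> {}"
  obtains a b where "a \<in> A" "b \<in> B" "d_ell_set L A B = d_ell L a b"
proof -
  have eq: "{d_ell L a b | a b. a \<in> A \<and> b \<in> B} = (\<lambda>(a, b). d_ell L a b) ` (A \<times> B)"
    by auto
  have "d_ell_set L A B = Min ((\<lambda>(a, b). d_ell L a b) ` (A \<times> B))"
    unfolding d_ell_set_def eq by (rule cInf_eq_Min) (use assms in auto)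
  also have "\<dots> \<in> (\<lambda>(a, b). d_ell L a b) ` (A \<times> B)"
    by (rule Min_in) (use assms in auto)
  finally show ?thesis
    using that by auto
qed

lemma abs_sub_div_le:
  fixes x y r :: real
  assumes "j \<ge> 1" "\<bar>i * x - j * y\<bar> \<le> r"
  shows "\<bar>y - i * x / j\<bar> \<le> r"
proof -
  have "\<bar>y - i * x / j\<bar> = \<bar>i * x - j * y\<bar> / j"
    using assms(1) by (simp add: abs_minus_commute field_simps)
  also have "\<dots> \<le> \<bar>i * x - j * y\<bar>"
    using assms(1) by (simp add: divide_le_eq mult_le_cancel_left1)
  finally show ?thesis
    using assms(2) by simp
qed

lemma d_ell_le_imp_near_multiple:
  assumes "L \<ge> 1" "d_ell L x y \<le> r"
  obtains i j where "i \<in> {1..L}" "j \<in> {1..L}" "\<bar>y - real i * x / real j\<bar> \<le> r"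
proof -
  obtain i j where ij: "i \<in> {1..L}" "j \<in> {1..L}" "d_ell L x y = \<bar>real i * x - real j * y\<bar>"
    using d_ell_attained[OF assms(1)] .
  then show ?thesis
    using that abs_sub_div_le[of "real j" "real i" x y r] assms(2) by auto
qed

lemma d_ell_le_imp_near_multiple':
  assumes "L \<ge> 1" "d_ell L x y \<le> r"
  obtains i j where "i \<in> {1..L}" "j \<in> {1..L}" "\<bar>x - real j * y / real i\<bar> \<le> r"
proof -
  obtain i j where ij: "i \<in> {1..L}" "j \<in> {1..L}" "d_ell L x y = \<bar>real i * x - real j * y\<bar>"
    using d_ell_attained[OF assms(1)] .
  then have "\<bar>real j * y - real i * x\<bar> \<le> r"
    using assms(2) by (simp add: abs_minus_commute)
  then show ?thesis
    using that abs_sub_div_le[of "real i" "real j" y x r] ij(1,2) by auto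
qed

lemma card_A_set_le:
  assumes "L \<ge> 1" "l \<ge> 1"
  shows "real (card (A_set L N l n)) \<le> 3 * real L ^ 2 * l"
proof -
  let ?C = "(\<lambda>(i, j). real i * real n / real j) ` ({1..L} \<times> {1..L})"
  have "real (card (A_set L N l n)) \<le> real (card ?C) * (2 * l + 1)"
  proof (rule card_le_of_covered)
    fix m assume "m \<in> A_set L N l n"
    then have "d_ell L (real n) (real m) \<le> l"
      unfolding A_set_def by auto
    then obtain i j where "i \<in> {1..L}" "j \<in> {1..L}" "\<bar>real m - real i * real n / real j\<bar> \<le> l"
      using d_ell_le_imp_near_multiple[OF assms(1)] by blast
    then show "\<exists>c\<in>?C. \<bar>real m - c\<bar> \<le> l"
      by force
  qed (use assms in auto)
  also have "\<dots> \<le> real L ^ 2 * (2 * l + 1)"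
  proof -
    have "card ?C \<le> L ^ 2"
      using card_image_le[of "{1..L} \<times> {1..L}"] by (simp add: power2_eq_square)
    then show ?thesis
      using assms by (intro mult_right_mono) (auto simp flip: of_nat_power)
  qed
  also have "\<dots> \<le> 3 * real L ^ 2 * l"
    using assms by (simp add: algebra_simps)
  finally show ?thesis .
qed

text \<open>With \<open>t = (i\<^sub>0, j\<^sub>0, i\<^sub>1, j\<^sub>1, i\<^sub>2, j\<^sub>2, s)\<close>: \<open>a \<approx> i\<^sub>0 n / j\<^sub>0\<close>, \<open>b = (i\<^sub>1 a - s k) / j\<^sub>1\<close>
  and \<open>m \<approx> j\<^sub>2 b / i\<^sub>2\<close>, composed.\<close>
definition chain_center ::
    "nat \<Rightarrow> nat \<Rightarrow> nat \<times> nat \<times> nat \<times> nat \<times> nat \<times> nat \<times> real \<Rightarrow> real" where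
  "chain_center n k = (\<lambda>(i0, j0, i1, j1, i2, j2, s).
     real j2 / real i2 * ((real i1 * (real i0 * real n / real j0) - s * real k) / real j1))"

lemma calA_set_realising_pair:
  assumes "L \<ge> 1" "l \<ge> 0" "n \<in> {1..N}" "m \<in> calA_set L N l n k"
  obtains a b where "a \<in> A_set L N l n" "b \<in> A_set L N l m"
    "real k = d_ell L (real a) (real b)"
proof -
  have m: "m \<in> {1..N}"
    and D: "d_ell_set L (real ` A_set L N l n) (real ` A_set L N l m) = real k"
    using assms(4) unfolding calA_set_def by auto
  have fin: "finite (real ` A_set L N l x)" for x
    unfolding A_set_def by auto
  have "n \<in> A_set L N l n" "m \<in> A_set L N l m"
    using self_in_A_set assms(1-3) m by auto
  then obtain a' b' where a': "a' \<in> real ` A_set L N l n" and b': "b' \<in> real ` A_set L N l m"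
    and "d_ell_set L (real ` A_set L N l n) (real ` A_set L N l m) = d_ell L a' b'"
    by (metis d_ell_set_attained[OF fin fin] empty_iff image_eqI)
  then show ?thesis
    using that D by auto
qed

lemma calA_set_member_near_center:
  assumes "L \<ge> 1" "l \<ge> 0" "n \<in> {1..N}" "m \<in> calA_set L N l n k"
  obtains t where "t \<in> {1..L} \<times> {1..L} \<times> {1..L} \<times> {1..L} \<times> {1..L} \<times> {1..L} \<times> {-1, 1}"
    "\<bar>real m - chain_center n k t\<bar> \<le> (real L ^ 2 + 1) * l"
proof -
  obtain a b where a: "a \<in> A_set L N l n" and b: "b \<in> A_set L N l m"
    and Dab: "real k = d_ell L (real a) (real b)"
    using calA_set_realising_pair[OF assms] .
  obtain i0 j0 where ij0: "i0 \<in> {1..L}" "j0 \<in> {1..L}"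
    and near_a: "\<bar>real a - real i0 * real n / real j0\<bar> \<le> l"
    using a d_ell_le_imp_near_multiple[OF assms(1)] unfolding A_set_def by blast
  obtain i2 j2 where ij2: "i2 \<in> {1..L}" "j2 \<in> {1..L}"
    and near_m: "\<bar>real m - real j2 * real b / real i2\<bar> \<le> l"
    using b d_ell_le_imp_near_multiple'[OF assms(1)] unfolding A_set_def by blast
  obtain i1 j1 where ij1: "i1 \<in> {1..L}" "j1 \<in> {1..L}"
    and k: "real k = \<bar>real i1 * real a - real j1 * real b\<bar>"
    using d_ell_attained[OF assms(1), of "real a" "real b"] Dab by auto
  define s :: real where "s = (if real i1 * real a \<ge> real j1 * real b then 1 else -1)"
  have b_eq: "real b = (real i1 * real a - s * real k) / real j1"
    using ij1 k by (auto simp: s_def field_simps)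
  define q where "q = real j2 * real i1 / (real i2 * real j1)"
  have q: "0 \<le> q" "q \<le> real L ^ 2"
  proof -
    have "real j2 * real i1 \<le> real L ^ 2"
      using ij1 ij2 by (simp add: power2_eq_square mult_mono)
    moreover have "1 * 1 \<le> real i2 * real j1"
      using ij1 ij2 by (intro mult_mono) auto
    ultimately show "0 \<le> q" "q \<le> real L ^ 2"
      unfolding q_def by (simp_all add: divide_le_eq mult_le_cancel_left1 order_trans)
  qed
  let ?t = "(i0, j0, i1, j1, i2, j2, s)"
  have "real m - chain_center n k ?t
      = (real m - real j2 * real b / real i2) + q * (real a - real i0 * real n / real j0)"
    using ij0 ij1 ij2 unfolding chain_center_def q_def b_eq by (simp add: field_simps)
  also have "\<bar>\<dots>\<bar> \<le> l + real L ^ 2 * l"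
  proof -
    have "\<bar>q * (real a - real i0 * real n / real j0)\<bar> \<le> real L ^ 2 * l"
      unfolding abs_mult using q near_a by (intro mult_mono) auto
    then show ?thesis
      using near_m abs_triangle_ineq by (smt (verit))
  qed
  finally show ?thesis
    using that[of ?t] ij0 ij1 ij2 by (simp add: s_def algebra_simps)
qed

lemma card_calA_set_le:
  assumes "L \<ge> 1" "l \<ge> 1" "n \<in> {1..N}"
  shows "real (card (calA_set L N l n k)) \<le> 4 * real L ^ 6 * (real L ^ 2 + 2) * l"
proof -
  let ?I = "{1..L} \<times> {1..L} \<times> {1..L} \<times> {1..L} \<times> {1..L} \<times> {1..L} \<times> {-1, 1::real}"
  let ?w = "(real L ^ 2 + 1) * l"
  have "real (card (calA_set L N l n k)) \<le> real (card (chain_center n k ` ?I)) * (2 * ?w + 1)"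
  proof (rule card_le_of_covered)
    fix m assume m: "m \<in> calA_set L N l n k"
    have "l \<ge> 0"
      using assms(2) by simp
    then obtain t where "t \<in> ?I" "\<bar>real m - chain_center n k t\<bar> \<le> ?w"
      by (rule calA_set_member_near_center[OF assms(1) _ assms(3) m])
    then show "\<exists>c\<in>chain_center n k ` ?I. \<bar>real m - c\<bar> \<le> ?w"
      by blast
  qed (use assms in auto)
  also have "\<dots> \<le> 2 * real L ^ 6 * (2 * ?w + 1)"
  proof -
    have "card (chain_center n k ` ?I) \<le> card ?I"
      by (rule card_image_le) simp
    also have "\<dots> = 2 * L ^ 6"
      by (simp add: card_cartesian_product power_numeral_reduce)
    finally have "card (chain_center n k ` ?I) \<le> 2 * L ^ 6" .
    then show ?thesis
      using assms by (intro mult_right_mono) (auto simp flip: of_nat_power)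
  qed
  also have "\<dots> \<le> 4 * real L ^ 6 * (real L ^ 2 + 2) * l"
    using assms mult_left_mono[of 1 l "4 * real L ^ 6"] by (simp add: algebra_simps)
  finally show ?thesis .
qed

theorem mainTheorem6:
  fixes L N n k :: nat and l :: real
  assumes "L \<ge> 1" and "N \<ge> 1" and "l \<ge> 1" and "n \<in> {1..N}"
  shows "real (card (A_set L N l n)) \<le> 3 * real L ^ 2 * l
    \<and> real (card (calA_set L N l n k)) \<le> 4 * real L ^ 6 * (real L ^ 2 + 2) * l"
  using card_A_set_le card_calA_set_le assms by blast

end
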